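(* Let $P\in\mathbb{C}[y]$ with $\deg P\geq 2$, $\delta\in\mathbb{C}\setminus\{0\}$, $h_1(x,y)=(y,P(y)-\delta x)$, $\theta\in(0,2\pi)\setminus\{\frac{\pi}{2},\pi,\frac{3\pi}{2}\}$, $R_\theta$ the linear map of $\mathbb{C}^2$ with matrix $\begin{pmatrix}\cos\theta&-\sin\theta\\ \sin\theta&\cos\theta\end{pmatrix}$, and $h_2=R_\theta^{-1}\circ h_1\circ R_\theta$. Then the group $G=\langle h_1,h_2\rangle$ of automorphisms of $\mathbb{C}^2$ is isomorphic to the free group on two generators (freely generated by $h_1,h_2$). *)

theory Defs
  imports Complex_Main "HOL-Computational_Algebra.Polynomial"
begin

definition henon :: "complex poly \<Rightarrow> complex \<Rightarrow> complex \<times> complex \<Rightarrow> complex \<times> complex" where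
  "henon P d = (\<lambda>(x, y). (y, poly P y - d * x))"

definition rot :: "real \<Rightarrow> complex \<times> complex \<Rightarrow> complex \<times> complex" where
  "rot t = (\<lambda>(x, y). (complex_of_real (cos t) * x - complex_of_real (sin t) * y,
                       complex_of_real (sin t) * x + complex_of_real (cos t) * y))"

text \<open>Words in the free group on two letters: a letter is (g, e) where g selects the
  generator (False = first, True = second) and e = True means the inverse of that generator.\<close>
type_synonym letter = "bool \<times> bool"

definition reduced_word :: "letter list \<Rightarrow> bool" where
  "reduced_word w \<longleftrightarrow> (\<forall>i. Suc i < length w \<longrightarrow>
      \<not> (fst (w ! i) = fst (w ! Suc i) \<and> snd (w ! i) \<noteq> snd (w ! Suc i)))"

definition eval_letter :: "('a \<Rightarrow> 'a) \<Rightarrow> ('a \<Rightarrow> 'a) \<Rightarrow> letter \<Rightarrow> ('a \<Rightarrow> 'a)" where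
  "eval_letter f g l = (let h = (if fst l then g else f) in if snd l then inv h else h)"

definition eval_word :: "('a \<Rightarrow> 'a) \<Rightarrow> ('a \<Rightarrow> 'a) \<Rightarrow> letter list \<Rightarrow> ('a \<Rightarrow> 'a)" where
  "eval_word f g w = foldr (\<lambda>l acc. eval_letter f g l \<circ> acc) w id"

definition freely_generate :: "('a \<Rightarrow> 'a) \<Rightarrow> ('a \<Rightarrow> 'a) \<Rightarrow> bool" where
  "freely_generate f g \<longleftrightarrow> (\<forall>w. w \<noteq> [] \<and> reduced_word w \<longrightarrow> eval_word f g w \<noteq> id)"

end

theory Submission
  imports Defs "HOL-Computational_Algebra.Fundamental_Theorem_Algebra"
begin

text \<open>Ping-pong. For small e > 0 and large R let V+ be the cone |x| \<le> e|y|, |y| \<ge> R, let V- be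
  its mirror image |y| \<le> e|x|, |x| \<ge> R, and let D be the set of points whose coordinates agree
  up to the factor 2e and have size at least eR. Since deg P \<ge> 2, P(y) dominates every linear
  term for large y, so h1 maps V+ \<union> D into V+ and h1^-1 maps V- \<union> D into V-. Since neither
  sin theta nor cos theta vanishes, R_theta and its inverse map V+ \<union> V- into D. Hence V+, V-
  and their preimages under R_theta are disjoint ping-pong regions for h1, h1^-1, h2, h2^-1: a
  nonempty reduced word sends a point of a region chosen away from those of its first and last
  letters into the region of its first letter, so it is not the identity.\<close>

definition inverse_letter :: "letter \<Rightarrow> letter" where
  "inverse_letter l = (fst l, \<not> snd l)"

lemma reduced_word_Cons_Cons:
  "reduced_word (l # l' # w) \<longleftrightarrow> l' \<noteq> inverse_letter l \<and> reduced_word (l' # w)"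
  unfolding reduced_word_def inverse_letter_def
  by (auto simp: prod_eq_iff nth_Cons split: nat.splits)

lemma eval_word_Cons: "eval_word f g (l # w) = eval_letter f g l \<circ> eval_word f g w"
  by (simp add: eval_word_def)

lemma ex_letter_avoiding: "\<exists>l :: letter. l \<noteq> a \<and> l \<noteq> b"
proof -
  have "\<exists>l \<in> {(False, False), (False, True), (True, False)}. l \<noteq> a \<and> l \<noteq> b" by auto
  then show ?thesis by blast
qed

context
  fixes f g :: "'a \<Rightarrow> 'a" and X :: "letter \<Rightarrow> 'a set"
  assumes maps: "\<And>l l' p. l' \<noteq> inverse_letter l \<Longrightarrow> p \<in> X l' \<Longrightarrow> eval_letter f g l p \<in> X l"
begin

lemma ping_pong_eval_word:
  "reduced_word (l # w) \<Longrightarrow> l' \<noteq> inverse_letter (last (l # w)) \<Longrightarrow> p \<in> X l'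
    \<Longrightarrow> eval_word f g (l # w) p \<in> X l"
proof (induction w arbitrary: l)
  case Nil
  then show ?case by (simp add: eval_word_def maps)
next
  case (Cons m w)
  have "eval_word f g (m # w) p \<in> X m"
    using Cons.IH Cons.prems by (simp add: reduced_word_Cons_Cons)
  moreover have "m \<noteq> inverse_letter l"
    using Cons.prems(1) by (simp add: reduced_word_Cons_Cons)
  ultimately show ?case by (simp add: eval_word_Cons maps)
qed

lemma ping_pong:
  assumes disjoint: "\<And>l l'. l \<noteq> l' \<Longrightarrow> X l \<inter> X l' = {}"
    and nonempty: "\<And>l. X l \<noteq> {}"
  shows "freely_generate f g"
  unfolding freely_generate_def
proof (intro allI impI)
  fix w :: "letter list"
  assume w: "w \<noteq> [] \<and> reduced_word w"
  then obtain l u where lu: "w = l # u" by (cases w) auto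
  obtain l' where l': "l' \<noteq> inverse_letter (last w)" "l' \<noteq> l"
    using ex_letter_avoiding by blast
  obtain p where p: "p \<in> X l'" using nonempty by blast
  have "reduced_word (l # u)" using w lu by simp
  moreover have "l' \<noteq> inverse_letter (last (l # u))" using l'(1) lu by simp
  ultimately have "eval_word f g w p \<in> X l" unfolding lu by (rule ping_pong_eval_word) (rule p)
  then have "eval_word f g w p \<noteq> p" using disjoint[OF l'(2)] p by (metis IntI empty_iff)
  then show "eval_word f g w \<noteq> id" by (metis id_apply)
qed

end

lemma inv_conjugate: "bij f \<Longrightarrow> bij r \<Longrightarrow> inv (inv r \<circ> f \<circ> r) = inv r \<circ> inv f \<circ> r"
  by (simp add: o_inv_distrib bij_comp bij_imp_bij_inv inv_inv_eq o_assoc)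

lemma ping_pong_conjugate:
  fixes f r :: "'a \<Rightarrow> 'a"
  assumes "bij f" "bij r"
    and f_into: "f ` (A \<union> C) \<subseteq> A" and inv_f_into: "inv f ` (B \<union> C) \<subseteq> B"
    and r_into: "r ` (A \<union> B) \<subseteq> C" and inv_r_into: "inv r ` (A \<union> B) \<subseteq> C"
    and AB: "A \<inter> B = {}" and AC: "A \<inter> C = {}" and BC: "B \<inter> C = {}"
    and "A \<noteq> {}" "B \<noteq> {}"
  shows "freely_generate f (inv r \<circ> f \<circ> r)"
proof -
  let ?g = "inv r \<circ> f \<circ> r"
  have r_inv_r: "r (inv r x) = x" for x
    using \<open>bij r\<close> by (simp add: bij_is_surj surj_f_inv_f)
  have r_vimage_into: "r -` (A \<union> B) \<subseteq> C"
    using inv_r_into bij_vimage_eq_inv_image[OF \<open>bij r\<close>] by metis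
  have f_maps: "f ` (A \<union> r -` A \<union> r -` B) \<subseteq> A"
    using f_into r_vimage_into by blast
  have inv_f_maps: "inv f ` (B \<union> r -` A \<union> r -` B) \<subseteq> B"
    using inv_f_into r_vimage_into by blast
  have g_maps: "?g ` (A \<union> B \<union> r -` A) \<subseteq> r -` A"
    using f_into r_into by (fastforce simp: r_inv_r)
  have inv_g_maps: "inv ?g ` (A \<union> B \<union> r -` B) \<subseteq> r -` B"
    using inv_f_into r_into \<open>bij f\<close> \<open>bij r\<close> by (fastforce simp: inv_conjugate r_inv_r)
  \<comment> \<open>the regions of f, inv f, ?g and inv ?g are A, B, r -` A and r -` B\<close>
  define X where "X l = (if fst l then r -` (if snd l then B else A) else if snd l then B else A)"
    for l
  show ?thesis
  proof (rule ping_pong[where X = X])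
    fix l l' :: letter and p
    assume "l' \<noteq> inverse_letter l" "p \<in> X l'"
    then show "eval_letter f ?g l p \<in> X l"
      using f_maps inv_f_maps g_maps inv_g_maps
      by (auto simp: X_def eval_letter_def inverse_letter_def prod_eq_iff image_subset_iff
          split: if_splits)
  next
    fix l l' :: letter
    assume "l \<noteq> l'"
    then show "X l \<inter> X l' = {}"
      using AB AC BC r_vimage_into
      by (auto simp: X_def prod_eq_iff split: if_splits)
  next
    fix l
    show "X l \<noteq> {}"
      using \<open>A \<noteq> {}\<close> \<open>B \<noteq> {}\<close> \<open>bij r\<close>
      by (auto simp: X_def bij_def surj_vimage_empty)
  qed
qed

definition henon_inv :: "complex poly \<Rightarrow> complex \<Rightarrow> complex \<times> complex \<Rightarrow> complex \<times> complex" where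
  "henon_inv P d = (\<lambda>(x, y). ((poly P x - y) / d, x))"

lemma inv_henon:
  assumes "d \<noteq> 0"
  shows "inv (henon P d) = henon_inv P d"
  by (rule inv_equality) (auto simp: henon_def henon_inv_def assms)

lemma bij_henon:
  assumes "d \<noteq> 0"
  shows "bij (henon P d)"
  by (rule o_bij[of "henon_inv P d"]) (auto simp: henon_def henon_inv_def assms)

lemma rot_uminus_rot: "rot (- t) (rot t p) = p"
proof -
  obtain x y where p: "p = (x, y)" by (cases p)
  define c s where "c = complex_of_real (cos t)" and "s = complex_of_real (sin t)"
  have "c * c + s * s = 1"
    unfolding c_def s_def by (metis of_real_add of_real_mult of_real_1 sin_cos_squared_add3)
  moreover have "rot (- t) (rot t p) = ((c * c + s * s) * x, (c * c + s * s) * y)"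
    by (simp add: rot_def p c_def s_def algebra_simps)
  ultimately show ?thesis by (simp add: p)
qed

lemma inv_rot: "inv (rot t) = rot (- t)"
  by (rule inv_equality) (metis rot_uminus_rot, metis rot_uminus_rot minus_minus)

lemma bij_rot: "bij (rot t)"
  by (rule o_bij[of "rot (- t)"]) (auto simp: rot_uminus_rot[of "- t", simplified] rot_uminus_rot)

lemma sin_cos_nonzero_off_axes:
  assumes "0 < \<theta>" "\<theta> < 2 * pi" "\<theta> \<notin> {pi / 2, pi, 3 * pi / 2}"
  shows "sin \<theta> \<noteq> 0 \<and> cos \<theta> \<noteq> 0"
proof
  show "sin \<theta> \<noteq> 0"
  proof
    assume "sin \<theta> = 0"
    then obtain i :: int where i: "\<theta> = of_int i * pi" by (auto simp: sin_zero_iff_int2)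
    then have "0 < real_of_int i" "real_of_int i < 2"
      using assms by (simp_all add: zero_less_mult_iff)
    then have "i = 1" by linarith
    then show False using i assms by simp
  qed
  show "cos \<theta> \<noteq> 0"
  proof
    assume "cos \<theta> = 0"
    then obtain i :: int where i: "\<theta> = (of_int i + 1/2) * pi"
      by (auto simp: cos_zero_iff_int2 algebra_simps)
    then have "0 < real_of_int i + 1/2" "real_of_int i + 1/2 < 2"
      using assms by (simp_all add: zero_less_mult_iff)
    then have "i = 0 \<or> i = 1" by linarith
    then show False using i assms by (auto simp: algebra_simps)
  qed
qed

lemma poly_dominates_linear:
  fixes P :: "'a :: {comm_semiring_0, real_normed_div_algebra} poly"
  assumes "degree P \<ge> 2"
  shows "\<exists>N. \<forall>z. N \<le> norm z \<longrightarrow> C * norm z \<le> norm (poly P z)"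
proof -
  obtain a Q where PQ: "P = pCons a Q" by (cases P)
  obtain b S where QS: "Q = pCons b S" by (cases Q)
  have "S \<noteq> 0" using assms PQ QS by (auto split: if_splits)
  then obtain r where r: "\<And>z. r \<le> norm z \<Longrightarrow> \<bar>C\<bar> + norm a \<le> norm (poly Q z)"
    using poly_infinity[of S "\<bar>C\<bar> + norm a" b] QS by blast
  have "C * norm z \<le> norm (poly P z)" if z: "max 1 r \<le> norm z" for z
  proof -
    have "C * norm z \<le> norm z * (\<bar>C\<bar> + norm a) - norm a"
      using z mult_left_mono[of 1 "norm z" "norm a"] by (auto simp: algebra_simps abs_mult_pos)
    also have "\<dots> \<le> norm z * norm (poly Q z) - norm a"
      using r[of z] z by (simp add: mult_left_mono)
    also have "\<dots> \<le> norm (a + z * poly Q z)"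
      by (metis add.commute norm_diff_ineq norm_mult)
    finally show ?thesis by (simp add: PQ)
  qed
  then show ?thesis by blast
qed

definition vert_cone :: "real \<Rightarrow> real \<Rightarrow> (complex \<times> complex) set" where
  "vert_cone a r = {(x, y). r \<le> norm y \<and> norm x \<le> a * norm y}"

definition horiz_cone :: "real \<Rightarrow> real \<Rightarrow> (complex \<times> complex) set" where
  "horiz_cone a r = {(x, y). r \<le> norm x \<and> norm y \<le> a * norm x}"

lemma vert_cone_mono: "a \<le> a' \<Longrightarrow> r' \<le> r \<Longrightarrow> vert_cone a r \<subseteq> vert_cone a' r'"
  by (auto simp: vert_cone_def) (meson mult_right_mono norm_ge_zero order_trans)

lemma horiz_cone_mono: "a \<le> a' \<Longrightarrow> r' \<le> r \<Longrightarrow> horiz_cone a r \<subseteq> horiz_cone a' r'"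
  by (auto simp: horiz_cone_def) (meson mult_right_mono norm_ge_zero order_trans)

lemma vert_cone_horiz_cone_disjoint:
  assumes "0 < r" "0 \<le> a" "a * b < 1"
  shows "vert_cone a r \<inter> horiz_cone b r' = {}"
proof (intro equals0I, clarsimp simp: vert_cone_def horiz_cone_def)
  fix x y :: complex
  assume "r \<le> norm y" "norm x \<le> a * norm y" "norm y \<le> b * norm x"
  then have "norm x \<le> (a * b) * norm x"
    using \<open>0 \<le> a\<close> by (metis mult.assoc mult_left_mono order_trans)
  then have "x = 0"
    using \<open>a * b < 1\<close> by (metis mult_le_cancel_right1 norm_ge_zero not_le norm_le_zero_iff)
  then show False using \<open>0 < r\<close> \<open>r \<le> norm y\<close> \<open>norm y \<le> b * norm x\<close> by simp
qed

lemma henon_image_vert_cone: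
  assumes "0 < e"
    and growth: "\<And>z. e * R \<le> norm z \<Longrightarrow> (1 + norm d) * norm z \<le> e * norm (poly P z)"
  shows "henon P d ` vert_cone (1 / (2 * e)) (e * R) \<subseteq> vert_cone e R"
proof (rule image_subsetI)
  fix p
  assume "p \<in> vert_cone (1 / (2 * e)) (e * R)"
  then obtain x y where p: "p = (x, y)" and y: "e * R \<le> norm y" and x: "2 * e * norm x \<le> norm y"
    using \<open>0 < e\<close> by (cases p) (auto simp: vert_cone_def field_simps)
  have "e * norm x \<le> norm y"
    using order_trans[OF _ x, of "e * norm x"] \<open>0 < e\<close> by simp
  then have "e * norm (d * x) \<le> norm d * norm y"
    using mult_left_mono[of "e * norm x" "norm y" "norm d"] by (simp add: norm_mult algebra_simps)
  then have "norm y \<le> (1 + norm d) * norm y - e * norm (d * x)"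
    by (simp add: algebra_simps)
  also have "\<dots> \<le> e * (norm (poly P y) - norm (d * x))"
    using growth[OF y] by (simp add: algebra_simps)
  also have "\<dots> \<le> e * norm (poly P y - d * x)"
    using \<open>0 < e\<close> norm_triangle_ineq2 by (intro mult_left_mono) auto
  finally have *: "norm y \<le> e * norm (poly P y - d * x)" .
  then have "R \<le> norm (poly P y - d * x)"
    using y \<open>0 < e\<close> by (meson mult_le_cancel_left_pos order_trans)
  with * show "henon P d p \<in> vert_cone e R"
    by (simp add: p henon_def vert_cone_def)
qed

lemma henon_inv_image_horiz_cone:
  assumes "d \<noteq> 0" "0 < e"
    and growth: "\<And>z. e * R \<le> norm z \<Longrightarrow> (1 + norm d) * norm z \<le> e * norm (poly P z)"
  shows "henon_inv P d ` horiz_cone (1 / (2 * e)) (e * R) \<subseteq> horiz_cone e R"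
proof (rule image_subsetI)
  fix p
  assume "p \<in> horiz_cone (1 / (2 * e)) (e * R)"
  then obtain x y where p: "p = (x, y)" and x: "e * R \<le> norm x" and y: "2 * e * norm y \<le> norm x"
    using \<open>0 < e\<close> by (cases p) (auto simp: horiz_cone_def field_simps)
  have "e * norm y \<le> norm x"
    using order_trans[OF _ y, of "e * norm y"] \<open>0 < e\<close> by simp
  then have "norm d * norm x \<le> (1 + norm d) * norm x - e * norm y"
    by (simp add: algebra_simps)
  also have "\<dots> \<le> e * (norm (poly P x) - norm y)"
    using growth[OF x] by (simp add: algebra_simps)
  also have "\<dots> \<le> e * norm (poly P x - y)"
    using \<open>0 < e\<close> norm_triangle_ineq2 by (intro mult_left_mono) auto
  finally have "norm x \<le> e * norm ((poly P x - y) / d)"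
    using \<open>d \<noteq> 0\<close> by (simp add: norm_divide field_simps)
  moreover from this have "R \<le> norm ((poly P x - y) / d)"
    using x \<open>0 < e\<close> by (meson mult_le_cancel_left_pos order_trans)
  ultimately show "henon_inv P d p \<in> horiz_cone e R"
    by (simp add: p henon_inv_def horiz_cone_def)
qed

lemma norm_rotated_coordinate_bounds:
  fixes u v :: complex
  assumes "norm v \<le> e * norm u" "4 * e \<le> \<bar>c\<bar>" "\<bar>c\<bar> \<le> 1" "\<bar>s\<bar> \<le> 1"
  shows "3 * e * norm u \<le> norm (of_real c * u + of_real s * v)"
    and "norm (of_real c * u + of_real s * v) \<le> (1 + e) * norm u"
proof -
  have "4 * e * norm u \<le> norm (of_real c * u)" and "norm (of_real c * u) \<le> norm u"
    using assms(2,3) by (simp_all add: norm_mult mult_right_mono mult_left_le_one_le)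
  moreover have "norm (of_real s * v) \<le> e * norm u"
    using assms(1,4)
    by (simp add: norm_mult) (meson mult_left_le_one_le norm_ge_zero abs_ge_zero order_trans)
  ultimately show "3 * e * norm u \<le> norm (of_real c * u + of_real s * v)"
    and "norm (of_real c * u + of_real s * v) \<le> (1 + e) * norm u"
    using norm_diff_ineq[of "of_real c * u" "of_real s * v"]
      norm_triangle_ineq[of "of_real c * u" "of_real s * v"]
    by (auto simp: algebra_simps)
qed

lemma comparable_mem_diagonal:
  assumes "0 < e" "e \<le> 1/4" "R \<le> n"
    and "3 * e * n \<le> norm u" "norm u \<le> (1 + e) * n" "3 * e * n \<le> norm v" "norm v \<le> (1 + e) * n"
  shows "(u, v) \<in> vert_cone (1 / (2 * e)) (e * R) \<inter> horiz_cone (1 / (2 * e)) (e * R)"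
proof -
  have "0 \<le> (1 - 2 * e) * n"
    using assms(4,5) by (simp add: algebra_simps)
  then have "0 \<le> n"
    using assms(2) by (simp add: zero_le_mult_iff)
  have "e * R \<le> 3 * e * n"
    using \<open>R \<le> n\<close> \<open>0 \<le> n\<close> \<open>0 < e\<close> by (simp add: mult_left_mono)
  moreover have "2 * e * ((1 + e) * n) \<le> 3 * e * n"
    using mult_left_mono[of "2 + 2 * e" 3 "e * n"] \<open>0 \<le> n\<close> assms(1,2)
    by (simp add: algebra_simps)
  moreover have "2 * e * norm u \<le> 2 * e * ((1 + e) * n)" "2 * e * norm v \<le> 2 * e * ((1 + e) * n)"
    using assms(1,5,7) by simp_all
  ultimately have "2 * e * norm u \<le> norm v" "2 * e * norm v \<le> norm u"
    and "e * R \<le> norm u" "e * R \<le> norm v"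
    using assms(4,6) by linarith+
  then show ?thesis
    using \<open>0 < e\<close> by (simp add: vert_cone_def horiz_cone_def field_simps)
qed

lemma rot_image_cones_subset_diagonal:
  assumes e: "0 < e" "e \<le> 1/4" and "4 * e \<le> \<bar>cos t\<bar>" "4 * e \<le> \<bar>sin t\<bar>"
  shows "rot t ` (vert_cone e R \<union> horiz_cone e R)
    \<subseteq> vert_cone (1 / (2 * e)) (e * R) \<inter> horiz_cone (1 / (2 * e)) (e * R)"
proof (rule image_subsetI)
  fix p
  assume p: "p \<in> vert_cone e R \<union> horiz_cone e R"
  obtain x y where xy: "p = (x, y)" by (cases p)
  define c s where "c = cos t" and "s = sin t"
  have trig: "4 * e \<le> \<bar>c\<bar>" "4 * e \<le> \<bar>s\<bar>" "4 * e \<le> \<bar>- s\<bar>"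
    "\<bar>c\<bar> \<le> 1" "\<bar>s\<bar> \<le> 1" "\<bar>- s\<bar> \<le> 1"
    using assms(3,4) by (simp_all add: c_def s_def)
  show "rot t p \<in> vert_cone (1 / (2 * e)) (e * R) \<inter> horiz_cone (1 / (2 * e)) (e * R)"
  proof (cases "p \<in> vert_cone e R")
    case True
    then have y: "R \<le> norm y" "norm x \<le> e * norm y" by (simp_all add: vert_cone_def xy)
    have "rot t p = (of_real (- s) * y + of_real c * x, of_real c * y + of_real s * x)"
      by (simp add: rot_def xy c_def s_def)
    then show ?thesis
      using norm_rotated_coordinate_bounds[OF y(2) trig(3) trig(6) trig(4)]
        norm_rotated_coordinate_bounds[OF y(2) trig(1) trig(4) trig(5)]
      by (metis comparable_mem_diagonal[OF e y(1)])
  next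
    case False
    then have x: "R \<le> norm x" "norm y \<le> e * norm x" using p by (simp_all add: horiz_cone_def xy)
    have "rot t p = (of_real c * x + of_real (- s) * y, of_real s * x + of_real c * y)"
      by (simp add: rot_def xy c_def s_def)
    then show ?thesis
      using norm_rotated_coordinate_bounds[OF x(2) trig(1) trig(4) trig(6)]
        norm_rotated_coordinate_bounds[OF x(2) trig(2) trig(5) trig(4)]
      by (metis comparable_mem_diagonal[OF e x(1)])
  qed
qed

lemma henon_rot_conjugate_freely_generate:
  assumes "d \<noteq> 0" and e: "0 < e" "e \<le> 1/4" and "4 * e \<le> \<bar>cos t\<bar>" "4 * e \<le> \<bar>sin t\<bar>"
    and "0 < R"
    and growth: "\<And>z. e * R \<le> norm z \<Longrightarrow> (1 + norm d) * norm z \<le> e * norm (poly P z)"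
  shows "freely_generate (henon P d) (inv (rot t) \<circ> henon P d \<circ> rot t)"
proof -
  define A where "A = vert_cone e R"
  define B where "B = horiz_cone e R"
  define C where "C = vert_cone (1 / (2 * e)) (e * R) \<inter> horiz_cone (1 / (2 * e)) (e * R)"
  have e_sq: "e * e \<le> 1/4 * 1/4"
    using mult_mono[OF e(2) e(2)] e(1) by simp
  then have wide: "e \<le> 1 / (2 * e)" "e * R \<le> R"
    using e \<open>0 < R\<close> by (simp_all add: field_simps)
  have "A \<union> C \<subseteq> vert_cone (1 / (2 * e)) (e * R)"
    using vert_cone_mono[OF wide] by (auto simp: A_def C_def)
  then have f_into: "henon P d ` (A \<union> C) \<subseteq> A"
    using henon_image_vert_cone[OF e(1) growth] unfolding A_def by blast
  have "B \<union> C \<subseteq> horiz_cone (1 / (2 * e)) (e * R)"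
    using horiz_cone_mono[OF wide] by (auto simp: B_def C_def)
  then have inv_f_into: "inv (henon P d) ` (B \<union> C) \<subseteq> B"
    using henon_inv_image_horiz_cone[OF \<open>d \<noteq> 0\<close> e(1) growth]
    unfolding inv_henon[OF \<open>d \<noteq> 0\<close>] B_def by blast
  have r_into: "rot t ` (A \<union> B) \<subseteq> C" and inv_r_into: "inv (rot t) ` (A \<union> B) \<subseteq> C"
    using rot_image_cones_subset_diagonal[OF e] assms(4,5)
    unfolding A_def B_def C_def inv_rot by simp_all
  have "vert_cone e R \<inter> horiz_cone e R = {}"
    using vert_cone_horiz_cone_disjoint[of R e e] e e_sq \<open>0 < R\<close> by simp
  moreover have "vert_cone e R \<inter> horiz_cone (1 / (2 * e)) (e * R) = {}"
    using vert_cone_horiz_cone_disjoint[of R e "1 / (2 * e)"] e \<open>0 < R\<close> by simp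
  moreover have "vert_cone (1 / (2 * e)) (e * R) \<inter> horiz_cone e R = {}"
    using vert_cone_horiz_cone_disjoint[of "e * R" "1 / (2 * e)" e] e \<open>0 < R\<close> by simp
  ultimately have "A \<inter> B = {}" "A \<inter> C = {}" "B \<inter> C = {}"
    by (auto simp: A_def B_def C_def)
  moreover have "(0, of_real R) \<in> A" "(of_real R, 0) \<in> B"
    using e \<open>0 < R\<close> by (simp_all add: A_def B_def vert_cone_def horiz_cone_def)
  ultimately show ?thesis
    using ping_pong_conjugate[OF bij_henon[OF \<open>d \<noteq> 0\<close>] bij_rot
        f_into inv_f_into r_into inv_r_into]
    by blast
qed

theorem mainTheorem2:
  fixes P :: "complex poly" and \<delta> :: complex and \<theta> :: real
  assumes "degree P \<ge> 2"
    and "\<delta> \<noteq> 0"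
    and "0 < \<theta>" and "\<theta> < 2 * pi"
    and "\<theta> \<notin> {pi / 2, pi, 3 * pi / 2}"
  shows "bij (henon P \<delta>) \<and> bij (rot \<theta>) \<and>
         freely_generate (henon P \<delta>) (inv (rot \<theta>) \<circ> henon P \<delta> \<circ> rot \<theta>)"
proof -
  define e where "e = min \<bar>cos \<theta>\<bar> \<bar>sin \<theta>\<bar> / 4"
  have "0 < e" using sin_cos_nonzero_off_axes[OF assms(3-5)] by (simp add: e_def)
  have "e \<le> 1/4" using abs_sin_le_one[of \<theta>] by (simp add: e_def min_def)
  obtain N where N: "\<And>z. N \<le> norm z \<Longrightarrow> (1 + norm \<delta>) / e * norm z \<le> norm (poly P z)"
    using poly_dominates_linear[OF assms(1)] by blast
  define R where "R = max 1 (N / e)"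
  have "0 < R" by (simp add: R_def)
  have "N \<le> e * R"
    using mult_left_mono[of "N / e" R e] \<open>0 < e\<close> by (simp add: R_def)
  then have growth: "(1 + norm \<delta>) * norm z \<le> e * norm (poly P z)" if "e * R \<le> norm z" for z
    using N[of z] that \<open>0 < e\<close> by (simp add: field_simps)
  have "4 * e \<le> \<bar>cos \<theta>\<bar>" "4 * e \<le> \<bar>sin \<theta>\<bar>" by (simp_all add: e_def)
  then have "freely_generate (henon P \<delta>) (inv (rot \<theta>) \<circ> henon P \<delta> \<circ> rot \<theta>)"
    using henon_rot_conjugate_freely_generate[OF assms(2) \<open>0 < e\<close> \<open>e \<le> 1/4\<close> _ _ \<open>0 < R\<close>
        growth]
    by blast
  then show ?thesis using bij_henon[OF assms(2)] bij_rot by blast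
qed

end
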